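(* Let $p$ be a prime, $m,t\ge 1$, $B=\mathrm{GF}(p^m)$ and $F=\mathrm{GF}(p^{mt})$, and assume that $t$ is divisible by $p$ (the characteristic of $F$). Let $n=|F|=|B|^t$, $k=n(1-1/|B|)$, and let $\mathcal{C}=\mathrm{RS}(F,k)=\{(f(\alpha))_{\alpha\in F} : f\in F[x],\ \deg f<k\}$, where the symbol $f(\alpha)$ is stored at the node indexed by $\alpha$. Then for any two distinct $\alpha^*,\overline{\alpha}\in F$, a repair center can recover both erased symbols $f(\alpha^* )$ and $f(\overline{\alpha})$ by downloading a total of $2(n-2)$ sub-symbols (elements of $B$), namely two sub-symbols from each surviving node $\alpha\in F\setminus\{\alpha^*,\overline{\alpha}\}$, each computed from the symbol $f(\alpha)$ stored at that node.
   Context: Elements of $F$ are called symbols and elements of $B$ sub-symbols. The trace is $\mathrm{Tr}_{F/B}(x)=\sum_{i=0}^{t-1}x^{|B|^i}$. In centralized repair, a single repair center downloads data from the surviving nodes and computes all erased symbols; the repair bandwidth is the total number of sub-symbols it downloads. *)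

theory Defs
  imports "HOL-Computational_Algebra.Polynomial" "HOL-Computational_Algebra.Primes" "HOL-Library.Cardinality"
begin

text \<open>The subfield GF(q) of a finite field F whose order is a power of q:
  it is the set of fixed points of the Frobenius-type map x \<mapsto> x^q.\<close>
definition subfield_of_order :: "nat \<Rightarrow> 'a::field set" where
  "subfield_of_order q = {x. x ^ q = x}"

text \<open>Centralized repair of the two erased nodes a1, a2 of the full-length
  Reed--Solomon code RS(F,k) (nodes indexed by all elements of F),
  downloading exactly two sub-symbols (elements of the subfield B) from each
  surviving node, each computed from the symbol stored at that node.
  q1 alpha, q2 alpha are the two download functions of node alpha; R is the
  repair center's reconstruction map, which only sees the downloaded data
  (the entries at the erased nodes are blanked to (0,0)).\<close>
definition two_erasure_repairable_2_per_node ::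
    "'a::field set \<Rightarrow> nat \<Rightarrow> 'a \<Rightarrow> 'a \<Rightarrow> bool" where
  "two_erasure_repairable_2_per_node B k a1 a2 \<longleftrightarrow>
     (\<exists>(q1 :: 'a \<Rightarrow> 'a \<Rightarrow> 'a) (q2 :: 'a \<Rightarrow> 'a \<Rightarrow> 'a)
        (R :: ('a \<Rightarrow> 'a \<times> 'a) \<Rightarrow> 'a \<times> 'a).
        (\<forall>\<alpha> x. q1 \<alpha> x \<in> B \<and> q2 \<alpha> x \<in> B) \<and>
        (\<forall>f :: 'a poly. degree f < k \<longrightarrow>
           R (\<lambda>\<alpha>. if \<alpha> \<noteq> a1 \<and> \<alpha> \<noteq> a2
                    then (q1 \<alpha> (poly f \<alpha>), q2 \<alpha> (poly f \<alpha>)) else (0, 0))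
             = (poly f a1, poly f a2)))"

end

theory Submission
  imports Defs "HOL-Number_Theory.Residues"
begin

text \<open>Let \<open>Q = p^m\<close>, so \<open>|F| = Q^t\<close>, and let Tr be the trace of \<open>F\<close> over \<open>B = GF(Q)\<close>.
  For \<open>deg h < |F| - Q^(t-1)\<close> and any \<open>u\<close>, the polynomial \<open>g(x) = Tr(u(x - a))/(x - a)\<close> has
  degree \<open>< Q^(t-1)\<close> and \<open>g(a) = u\<close>, so \<open>\<Sum>\<^sub>x h(x) g(x) = 0\<close>; taking traces gives the dual
  identity \<open>Tr(u h(a)) + \<Sum>\<^sub>x\<^sub>\<noteq>\<^sub>a Tr(u(x - a)) Tr(h(x)/(x - a)) = 0\<close>.
  Node \<open>x\<close> therefore sends \<open>Tr(f(x)/(x - a\<^sub>1))\<close> and \<open>Tr(f(x)/(x - a\<^sub>2))\<close>.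
  If two codewords give the same downloads, their difference \<open>h\<close> satisfies the identity at
  \<open>a\<^sub>1\<close> with only the term of \<open>a\<^sub>2\<close> left, and symmetrically. At \<open>a\<^sub>2\<close> with \<open>u = 1/(a\<^sub>1 - a\<^sub>2)\<close>
  that term carries the factor \<open>Tr(1) = t = 0\<close> (here \<open>p dvd t\<close> is used), so it vanishes;
  then \<open>Tr(u h(a\<^sub>1)) = 0\<close> for all \<open>u\<close>, which forces \<open>h(a\<^sub>1) = 0\<close> since Tr is not identically
  zero. The bound \<open>k \<le> |F| - |F|/|B|\<close> keeps all differences within the degree range.\<close>

lemma finite_field_power_card_eq:
  fixes x :: "'a::{field,finite}"
  shows "x ^ CARD('a) = x"
proof (cases "x = 0")
  case True
  then show ?thesis by simp
next
  case False
  let ?U = "UNIV - {0 :: 'a}"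
  have "x ^ card ?U * \<Prod>?U = (\<Prod>y\<in>?U. x * y)"
    by (simp add: prod.distrib)
  also have "\<dots> = \<Prod>?U"
    by (rule prod.reindex_bij_witness[of _ "\<lambda>y. y / x" "\<lambda>y. x * y"]) (use False in auto)
  finally have "x ^ card ?U = 1"
    by simp
  have "CARD('a) = Suc (card ?U)"
    by (simp add: card_Diff_singleton finite_UNIV_card_ge_0)
  then have "x ^ CARD('a) = x * x ^ card ?U"
    by (simp only: power_Suc)
  with \<open>x ^ card ?U = 1\<close> show ?thesis
    by simp
qed

lemma prime_CHAR_finite_field: "prime CHAR('a::{field,finite})"
  by (rule prime_CHAR_semidom) (simp add: finite_imp_CHAR_pos)

lemma CHAR_eq_if_card_eq_prime_power:
  assumes "prime p" and "CARD('a::{field,finite}) = p ^ n"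
  shows "CHAR('a) = p"
proof -
  have "CHAR('a) dvd p ^ n"
    using CHAR_dvd_CARD[where 'a = 'a] assms(2) by simp
  then have "CHAR('a) dvd p"
    using prime_CHAR_finite_field[where 'a = 'a] prime_dvd_power by blast
  then show ?thesis
    using prime_CHAR_finite_field[where 'a = 'a] assms(1) by (simp add: primes_dvd_imp_eq)
qed

lemma card_eq_power_imp_gt:
  assumes "CARD('a::{field,finite}) = Q ^ t"
  shows "1 < Q" and "0 < t"
proof -
  have "2 \<le> Q ^ t"
    using card_mono[of UNIV "{0, 1 :: 'a}"] assms by simp
  moreover have "Q ^ t \<le> 1" if "Q \<le> 1"
    using that power_le_one[of Q t] by simp
  ultimately show "1 < Q" and "0 < t"
    by (fastforce, cases t) auto
qed

lemma sum_UNIV_power_eq_0: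
  assumes "j < CARD('a::{field,finite}) - 1"
  shows "(\<Sum>x\<in>UNIV. (x::'a) ^ j) = 0"
proof (cases "j = 0")
  case True
  then show ?thesis
    using CHAR_dvd_CARD[where 'a = 'a] by (simp add: of_nat_eq_0_iff_char_dvd)
next
  case False
  define P :: "'a poly" where "P = Polynomial.monom 1 j + [:-1:]"
  have deg_P: "degree P = j"
    using False by (simp add: P_def degree_monom_eq degree_add_eq_left)
  with False have "P \<noteq> 0"
    by auto
  obtain c :: 'a where c: "c \<noteq> 0" "c ^ j \<noteq> 1"
  proof (rule ccontr)
    assume "\<not> thesis"
    then have "UNIV - {0} \<subseteq> {x. poly P x = 0}"
      using that by (auto simp: P_def poly_monom)
    then have "card (UNIV - {0 :: 'a}) \<le> card {x. poly P x = 0}"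
      using poly_roots_finite[OF \<open>P \<noteq> 0\<close>] by (rule card_mono[rotated])
    also have "\<dots> \<le> j"
      using card_poly_roots_bound[OF \<open>P \<noteq> 0\<close>] deg_P by simp
    finally show False
      using assms by (simp add: card_Diff_singleton)
  qed
  define S where "S = (\<Sum>x\<in>UNIV. (x::'a) ^ j)"
  have "S = (\<Sum>x\<in>UNIV. (c * x) ^ j)"
    unfolding S_def
    by (rule sum.reindex_bij_witness[of _ "\<lambda>y. c * y" "\<lambda>y. y / c"]) (use c in auto)
  also have "\<dots> = c ^ j * S"
    by (simp add: S_def power_mult_distrib sum_distrib_left)
  finally have "(c ^ j - 1) * S = 0"
    by (simp add: algebra_simps)
  then show ?thesis
    using c(2) by (simp add: S_def)
qed

lemma sum_UNIV_poly_eq_0: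
  fixes h :: "'a::{field,finite} poly"
  assumes "degree h < CARD('a) - 1"
  shows "(\<Sum>x\<in>UNIV. poly h x) = 0"
proof -
  have "(\<Sum>x\<in>UNIV. poly h x) = (\<Sum>i\<le>degree h. Polynomial.coeff h i * (\<Sum>x\<in>UNIV. x ^ i))"
    by (simp add: poly_altdef sum_distrib_left sum.swap[of _ UNIV])
  also have "\<dots> = 0"
    using assms by (intro sum.neutral) (auto simp: sum_UNIV_power_eq_0)
  finally show ?thesis .
qed

lemma card_subfield_of_order_le:
  assumes "1 < Q"
  shows "card (subfield_of_order Q :: 'a::{field,finite} set) \<le> Q"
proof -
  define P :: "'a poly" where "P = Polynomial.monom 1 Q + [:0, -1:]"
  have deg_P: "degree P = Q"
    using assms by (simp add: P_def degree_monom_eq degree_add_eq_left)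
  with assms have "P \<noteq> 0"
    by auto
  have "subfield_of_order Q = {x :: 'a. poly P x = 0}"
    by (auto simp: P_def subfield_of_order_def poly_monom)
  then show ?thesis
    using card_poly_roots_bound[OF \<open>P \<noteq> 0\<close>] deg_P by simp
qed

text \<open>\<open>field_trace Q t\<close> is \<open>Tr\<^bsub>F/B\<^esub>\<close> for \<open>|B| = Q\<close> and \<open>[F : B] = t\<close>, written as the
  polynomial map so that it makes sense in any field.\<close>

definition field_trace :: "nat \<Rightarrow> nat \<Rightarrow> 'a::field \<Rightarrow> 'a" where
  "field_trace Q t x = (\<Sum>i<t. x ^ (Q ^ i))"

lemma field_trace_one: "field_trace Q t 1 = of_nat t"
  by (simp add: field_trace_def)

lemma field_trace_sum:
  fixes f :: "'b \<Rightarrow> 'a::field"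
  assumes "prime CHAR('a)" and "Q = CHAR('a) ^ m"
  shows "field_trace Q t (sum f A) = (\<Sum>y\<in>A. field_trace Q t (f y))"
proof -
  have "sum f A ^ (Q ^ i) = (\<Sum>y\<in>A. f y ^ (Q ^ i))" for i
    by (rule freshmans_dream_sum'[where n = "m * i"]) (simp_all add: assms power_mult)
  then show ?thesis
    by (simp add: field_trace_def sum.swap[of _ _ A])
qed

lemma field_trace_add:
  fixes x y :: "'a::field"
  assumes "prime CHAR('a)" and "Q = CHAR('a) ^ m"
  shows "field_trace Q t (x + y) = field_trace Q t x + field_trace Q t y"
proof -
  have "(x + y) ^ (Q ^ i) = x ^ (Q ^ i) + y ^ (Q ^ i)" for i
    by (rule freshmans_dream'[where n = "m * i"]) (simp_all add: assms power_mult)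
  then show ?thesis
    by (simp add: field_trace_def sum.distrib)
qed

lemma field_trace_diff:
  fixes x y :: "'a::field"
  assumes "prime CHAR('a)" and "Q = CHAR('a) ^ m"
  shows "field_trace Q t (x - y) = field_trace Q t x - field_trace Q t y"
  using field_trace_add[OF assms, of t "x - y" y] by simp

lemma field_trace_zero:
  assumes "prime CHAR('a::field)" and "Q = CHAR('a) ^ m"
  shows "field_trace Q t (0::'a) = 0"
  using field_trace_diff[OF assms, of t 0 0] by simp

lemma field_trace_minus:
  fixes x :: "'a::field"
  assumes "prime CHAR('a)" and "Q = CHAR('a) ^ m"
  shows "field_trace Q t (- x) = - field_trace Q t x"
  using field_trace_diff[OF assms, of t 0 x] field_trace_zero[OF assms] by simp

lemma field_trace_mult_fixed:
  fixes c x :: "'a::field"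
  assumes "c ^ Q = c"
  shows "field_trace Q t (c * x) = c * field_trace Q t x"
proof -
  have "c ^ (Q ^ i) = c" for i
    by (induction i) (simp_all add: power_mult assms)
  then show ?thesis
    by (simp add: field_trace_def power_mult_distrib sum_distrib_left)
qed

lemma field_trace_in_subfield_of_order:
  fixes x :: "'a::{field,finite}"
  assumes "Q = CHAR('a) ^ m" and "CARD('a) = Q ^ t"
  shows "field_trace Q t x \<in> subfield_of_order Q"
proof -
  have "field_trace Q t x ^ Q = (\<Sum>i<t. x ^ (Q ^ Suc i))"
    unfolding field_trace_def
    by (subst freshmans_dream_sum'[where n = m])
       (simp_all add: assms(1) prime_CHAR_finite_field power_mult[symmetric] mult.commute)
  also have "\<dots> = field_trace Q t x"
    using sum.lessThan_Suc_shift[of "\<lambda>i. x ^ (Q ^ i)" t]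
    by (simp add: field_trace_def assms(2)[symmetric] finite_field_power_card_eq add.commute)
  finally show ?thesis
    by (simp add: subfield_of_order_def)
qed

lemma field_trace_linear_quotient_poly:
  fixes a u :: "'a::field"
  assumes "1 < Q" and "0 < t"
  obtains g where "degree g < Q ^ (t - 1)" and "poly g a = u"
    and "\<And>x. poly g x * (x - a) = field_trace Q t (u * (x - a))"
proof
  define g where "g = (\<Sum>i<t. Polynomial.smult (u ^ (Q ^ i)) ([:-a, 1:] ^ (Q ^ i - 1)))"
  have poly_g: "poly g x = (\<Sum>i<t. u ^ (Q ^ i) * (x - a) ^ (Q ^ i - 1))" for x
    by (simp add: g_def poly_sum)
  show "degree g < Q ^ (t - 1)"
    unfolding g_def
  proof (rule degree_sum_less)
    fix i assume "i \<in> {..<t}"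
    then have "Q ^ i \<le> Q ^ (t - 1)" and "0 < Q ^ i"
      using assms(1) by (auto intro: power_increasing)
    then have "Q ^ i - 1 < Q ^ (t - 1)"
      by linarith
    then show "degree (Polynomial.smult (u ^ (Q ^ i)) ([:-a, 1:] ^ (Q ^ i - 1))) < Q ^ (t - 1)"
      using degree_smult_le[of "u ^ (Q ^ i)" "[:-a, 1:] ^ (Q ^ i - 1)"]
      by (simp only: degree_linear_power)
  qed (use assms(1) in simp)
  have "Q ^ i - 1 = 0 \<longleftrightarrow> i = 0" for i
    using assms(1) by (simp add: le_Suc_eq)
  then have "poly g a = (\<Sum>i<t. if i = 0 then u else 0)"
    unfolding poly_g by (intro sum.cong) (auto simp: power_0_left)
  then show "poly g a = u"
    using assms(2) by simp
  show "poly g x * (x - a) = field_trace Q t (u * (x - a))" for x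
  proof -
    have "(x - a) ^ (Q ^ i - 1) * (x - a) = (x - a) ^ (Q ^ i)" for i
      using assms(1) by (simp add: power_Suc2[symmetric])
    then show ?thesis
      by (simp add: poly_g field_trace_def sum_distrib_right power_mult_distrib mult.assoc)
  qed
qed

lemma field_trace_not_identically_zero:
  assumes "CARD('a::{field,finite}) = Q ^ t"
  shows "\<exists>w::'a. field_trace Q t w \<noteq> 0"
proof (rule ccontr)
  assume "\<not> ?thesis"
  then have trace_0: "field_trace Q t w = 0" for w :: 'a
    by simp
  have "1 < Q" and "0 < t"
    using card_eq_power_imp_gt[OF assms] by auto
  then obtain g :: "'a poly" where deg_g: "degree g < Q ^ (t - 1)" and "poly g 0 = 1"
    and g_trace: "\<And>x. poly g x * x = field_trace Q t (1 * x)"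
    using field_trace_linear_quotient_poly[of Q t 0 1] by auto
  then have "g \<noteq> 0"
    by auto
  have "UNIV - {0} \<subseteq> {x. poly g x = 0}"
    using g_trace trace_0 by auto
  then have "card (UNIV - {0 :: 'a}) \<le> card {x. poly g x = 0}"
    using poly_roots_finite[OF \<open>g \<noteq> 0\<close>] by (rule card_mono[rotated])
  also have "\<dots> < Q ^ (t - 1)"
    using card_poly_roots_bound[OF \<open>g \<noteq> 0\<close>] deg_g by simp
  finally have "CARD('a) - 1 < Q ^ (t - 1)"
    by (simp add: card_Diff_singleton)
  moreover have "Q ^ (t - 1) < CARD('a)"
    using assms \<open>1 < Q\<close> \<open>0 < t\<close> by simp
  ultimately show False
    by linarith
qed

lemma sum_field_trace_quotient_eq_0:
  fixes h :: "'a::{field,finite} poly" and a u :: 'a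
  assumes "CARD('a) = Q ^ t" and deg_h: "degree h < CARD('a) - Q ^ (t - 1)"
  shows "u * poly h a + (\<Sum>x\<in>UNIV - {a}. field_trace Q t (u * (x - a)) * (poly h x / (x - a))) = 0"
proof -
  have "1 < Q" and "0 < t"
    using card_eq_power_imp_gt[OF assms(1)] by auto
  then obtain g :: "'a poly" where deg_g: "degree g < Q ^ (t - 1)" and "poly g a = u"
    and g_trace: "\<And>x. poly g x * (x - a) = field_trace Q t (u * (x - a))"
    using field_trace_linear_quotient_poly by blast
  have "degree (h * g) < CARD('a) - 1"
    using degree_mult_le[of h g] deg_h deg_g by linarith
  then have "0 = (\<Sum>x\<in>UNIV. poly h x * poly g x)"
    using sum_UNIV_poly_eq_0 by fastforce
  also have "\<dots> = poly h a * poly g a + (\<Sum>x\<in>UNIV - {a}. poly h x * poly g x)"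
    by (rule sum.remove) auto
  also have "(\<Sum>x\<in>UNIV - {a}. poly h x * poly g x)
      = (\<Sum>x\<in>UNIV - {a}. field_trace Q t (u * (x - a)) * (poly h x / (x - a)))"
    by (intro sum.cong refl) (auto simp flip: g_trace)
  finally show ?thesis
    using \<open>poly g a = u\<close> by (simp add: mult.commute)
qed

lemma field_trace_dual_identity:
  fixes h :: "'a::{field,finite} poly" and a u :: 'a
  assumes "Q = CHAR('a) ^ m" and "CARD('a) = Q ^ t"
    and "degree h < CARD('a) - Q ^ (t - 1)"
  shows "field_trace Q t (u * poly h a)
    + (\<Sum>x\<in>UNIV - {a}. field_trace Q t (u * (x - a)) * field_trace Q t (poly h x / (x - a))) = 0"
proof -
  note additive = field_trace_add[OF prime_CHAR_finite_field assms(1)]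
    field_trace_sum[OF prime_CHAR_finite_field assms(1)]
  have linear: "field_trace Q t (field_trace Q t y * z) = field_trace Q t y * field_trace Q t z"
    for y z :: 'a
    using field_trace_in_subfield_of_order[OF assms(1,2)]
    by (intro field_trace_mult_fixed) (simp add: subfield_of_order_def)
  from sum_field_trace_quotient_eq_0[OF assms(2,3), of u a]
  have "field_trace Q t (u * poly h a
      + (\<Sum>x\<in>UNIV - {a}. field_trace Q t (u * (x - a)) * (poly h x / (x - a)))) = field_trace Q t 0"
    by (rule arg_cong)
  then show ?thesis
    by (simp only: additive linear field_trace_zero[OF prime_CHAR_finite_field assms(1)])
qed

lemma poly_eq_0_if_field_traces_vanish:
  fixes h :: "'a::{field,finite} poly" and a b :: 'a
  assumes "Q = CHAR('a) ^ m" and "CARD('a) = Q ^ t" and "CHAR('a) dvd t" and "a \<noteq> b"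
    and deg_h: "degree h < CARD('a) - Q ^ (t - 1)"
    and vanish: "\<And>x. x \<noteq> a \<Longrightarrow> x \<noteq> b \<Longrightarrow>
      field_trace Q t (poly h x / (x - a)) = 0 \<and> field_trace Q t (poly h x / (x - b)) = 0"
  shows "poly h a = 0"
proof -
  let ?T = "field_trace Q t"
  have one_surviving_term: "?T (u * poly h c) = - (?T (u * (d - c)) * ?T (poly h d / (d - c)))"
    if "c = a \<and> d = b \<or> c = b \<and> d = a" for u c d
  proof -
    have "c \<noteq> d"
      using that \<open>a \<noteq> b\<close> by auto
    have "(\<Sum>x\<in>UNIV - {c}. ?T (u * (x - c)) * ?T (poly h x / (x - c)))
        = ?T (u * (d - c)) * ?T (poly h d / (d - c))
          + (\<Sum>x\<in>UNIV - {c} - {d}. ?T (u * (x - c)) * ?T (poly h x / (x - c)))"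
      by (rule sum.remove) (use \<open>c \<noteq> d\<close> in auto)
    also have "(\<Sum>x\<in>UNIV - {c} - {d}. ?T (u * (x - c)) * ?T (poly h x / (x - c))) = 0"
      using vanish that by (intro sum.neutral) auto
    finally show ?thesis
      using field_trace_dual_identity[OF assms(1,2) deg_h, of u c] by (simp add: eq_neg_iff_add_eq_0)
  qed
  have "?T (poly h b / (a - b)) = 0"
    using one_surviving_term[of b a "1 / (a - b)"] \<open>a \<noteq> b\<close> \<open>CHAR('a) dvd t\<close>
    by (simp add: field_trace_one of_nat_eq_0_iff_char_dvd)
  moreover have "poly h b / (b - a) = - (poly h b / (a - b))"
    by (metis minus_diff_eq minus_divide_right)
  ultimately have "?T (poly h b / (b - a)) = 0"
    by (simp add: field_trace_minus[OF prime_CHAR_finite_field assms(1)])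
  then have "?T (u * poly h a) = 0" for u
    using one_surviving_term[of a b u] by simp
  moreover obtain w :: 'a where "?T w \<noteq> 0"
    using field_trace_not_identically_zero[OF assms(2)] by blast
  ultimately show "poly h a = 0"
    by (metis nonzero_divide_eq_eq)
qed

lemma field_trace_downloads_determine_erased_values:
  fixes f g :: "'a::{field,finite} poly" and a1 a2 :: 'a
  assumes "Q = CHAR('a) ^ m" and "CARD('a) = Q ^ t" and "CHAR('a) dvd t" and "a1 \<noteq> a2"
    and "degree f < CARD('a) - Q ^ (t - 1)" and "degree g < CARD('a) - Q ^ (t - 1)"
    and same_downloads: "\<And>x. x \<noteq> a1 \<Longrightarrow> x \<noteq> a2 \<Longrightarrow>
      field_trace Q t (poly f x / (x - a1)) = field_trace Q t (poly g x / (x - a1)) \<and>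
      field_trace Q t (poly f x / (x - a2)) = field_trace Q t (poly g x / (x - a2))"
  shows "poly f a1 = poly g a1 \<and> poly f a2 = poly g a2"
proof -
  have deg: "degree (f - g) < CARD('a) - Q ^ (t - 1)"
    using degree_diff_less assms(5,6) by blast
  have vanish: "field_trace Q t (poly (f - g) x / (x - a1)) = 0 \<and>
      field_trace Q t (poly (f - g) x / (x - a2)) = 0" if "x \<noteq> a1" "x \<noteq> a2" for x
    using same_downloads[OF that]
    by (simp add: diff_divide_distrib field_trace_diff[OF prime_CHAR_finite_field assms(1)])
  have "poly (f - g) a1 = 0"
    using poly_eq_0_if_field_traces_vanish[OF assms(1-4) deg] vanish by blast
  moreover have "poly (f - g) a2 = 0"
    using poly_eq_0_if_field_traces_vanish[OF assms(1-3) _ deg, of a2 a1] vanish assms(4) by blast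
  ultimately show ?thesis
    by simp
qed

lemma two_erasure_repairable_2_per_nodeI:
  fixes q1 q2 :: "'a::field \<Rightarrow> 'a \<Rightarrow> 'a"
  assumes "\<And>\<alpha> x. q1 \<alpha> x \<in> B" and "\<And>\<alpha> x. q2 \<alpha> x \<in> B"
    and determined: "\<And>f g. degree f < k \<Longrightarrow> degree g < k \<Longrightarrow>
      (\<And>\<alpha>. \<alpha> \<noteq> a1 \<Longrightarrow> \<alpha> \<noteq> a2 \<Longrightarrow>
        q1 \<alpha> (poly f \<alpha>) = q1 \<alpha> (poly g \<alpha>) \<and> q2 \<alpha> (poly f \<alpha>) = q2 \<alpha> (poly g \<alpha>)) \<Longrightarrow>
      poly f a1 = poly g a1 \<and> poly f a2 = poly g a2"
  shows "two_erasure_repairable_2_per_node B k a1 a2"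
proof -
  define downloads :: "'a poly \<Rightarrow> 'a \<Rightarrow> 'a \<times> 'a" where
    "downloads f \<alpha> = (if \<alpha> \<noteq> a1 \<and> \<alpha> \<noteq> a2
      then (q1 \<alpha> (poly f \<alpha>), q2 \<alpha> (poly f \<alpha>)) else (0, 0))" for f \<alpha>
  define R where
    "R D = (let f = SOME f. degree f < k \<and> downloads f = D in (poly f a1, poly f a2))" for D
  have "R (downloads f) = (poly f a1, poly f a2)" if "degree f < k" for f
  proof -
    define g where "g = (SOME g. degree g < k \<and> downloads g = downloads f)"
    have "degree g < k \<and> downloads g = downloads f"
      unfolding g_def by (rule someI[of _ f]) (use that in simp)
    then have deg_g: "degree g < k" and same: "\<And>\<alpha>. downloads g \<alpha> = downloads f \<alpha>"
      by auto
    have "q1 \<alpha> (poly g \<alpha>) = q1 \<alpha> (poly f \<alpha>) \<and> q2 \<alpha> (poly g \<alpha>) = q2 \<alpha> (poly f \<alpha>)"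
      if "\<alpha> \<noteq> a1" "\<alpha> \<noteq> a2" for \<alpha>
      using same[of \<alpha>] that by (simp add: downloads_def)
    then have "poly g a1 = poly f a1 \<and> poly g a2 = poly f a2"
      using deg_g \<open>degree f < k\<close> by (intro determined)
    then show ?thesis
      by (simp add: R_def Let_def flip: g_def)
  qed
  then show ?thesis
    unfolding two_erasure_repairable_2_per_node_def downloads_def using assms(1,2) by blast
qed

lemma card_div_card_subfield_of_order_ge:
  assumes "CARD('a::{field,finite}) = Q ^ t"
  shows "Q ^ (t - 1) \<le> CARD('a) div card (subfield_of_order Q :: 'a set)"
proof -
  have "1 < Q" and "0 < t"
    using card_eq_power_imp_gt[OF assms] by auto
  have "0 \<in> (subfield_of_order Q :: 'a set)"
    using \<open>1 < Q\<close> by (simp add: subfield_of_order_def)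
  then have "0 < card (subfield_of_order Q :: 'a set)"
    by (auto simp: card_gt_0_iff)
  then have "CARD('a) div Q \<le> CARD('a) div card (subfield_of_order Q :: 'a set)"
    using card_subfield_of_order_le[OF \<open>1 < Q\<close>] by (rule div_le_mono2)
  moreover have "CARD('a) div Q = Q ^ (t - 1)"
    using assms \<open>0 < t\<close> \<open>1 < Q\<close> by (cases t) auto
  ultimately show ?thesis
    by simp
qed

theorem theorem2:
  fixes p m t :: nat and a1 a2 :: "'a::{field,finite}"
  assumes "prime p" and "m \<ge> 1" and "t \<ge> 1"
    and "CARD('a) = p ^ (m * t)"
    and "p dvd t"
    and "a1 \<noteq> a2"
  shows "two_erasure_repairable_2_per_node (subfield_of_order (p ^ m) :: 'a set)
           (CARD('a) - CARD('a) div card (subfield_of_order (p ^ m) :: 'a set)) a1 a2"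
proof -
  have char: "CHAR('a) = p"
    using CHAR_eq_if_card_eq_prime_power[OF assms(1,4)] .
  have card: "CARD('a) = (p ^ m) ^ t"
    using assms(4) by (simp add: power_mult)
  let ?k = "CARD('a) - CARD('a) div card (subfield_of_order (p ^ m) :: 'a set)"
  have k_le: "?k \<le> CARD('a) - (p ^ m) ^ (t - 1)"
    using card_div_card_subfield_of_order_ge[OF card] by linarith
  show ?thesis
  proof (rule two_erasure_repairable_2_per_nodeI[of
        "\<lambda>\<alpha> x. field_trace (p ^ m) t (x / (\<alpha> - a1))" _
        "\<lambda>\<alpha> x. field_trace (p ^ m) t (x / (\<alpha> - a2))"])
    show "field_trace (p ^ m) t (x / (\<alpha> - a1)) \<in> subfield_of_order (p ^ m)"
      and "field_trace (p ^ m) t (x / (\<alpha> - a2)) \<in> subfield_of_order (p ^ m)" for \<alpha> x :: 'a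
      using field_trace_in_subfield_of_order char card by blast+
    show "poly f a1 = poly g a1 \<and> poly f a2 = poly g a2"
      if "degree f < ?k" and "degree g < ?k" and "\<And>\<alpha>. \<alpha> \<noteq> a1 \<Longrightarrow> \<alpha> \<noteq> a2 \<Longrightarrow>
        field_trace (p ^ m) t (poly f \<alpha> / (\<alpha> - a1)) = field_trace (p ^ m) t (poly g \<alpha> / (\<alpha> - a1)) \<and>
        field_trace (p ^ m) t (poly f \<alpha> / (\<alpha> - a2)) = field_trace (p ^ m) t (poly g \<alpha> / (\<alpha> - a2))"
      for f g :: "'a poly"
      using field_trace_downloads_determine_erased_values[of "p ^ m" m t a1 a2 f g] that k_le
        char card assms(5,6) by auto
  qed
qed

end
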